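(* Let $K$ be a Kripke structure over $\mathbf{AP}$, $D(K)$ its deadlock extension, and $s$ a state of $K$. Then for every $\mathsf{CTL}^*_\infty$ state formula $\varphi$: $s\models\varphi$ in $K$ iff $s\models\mathbf{D}(\varphi)$ in $D(K)$; and for every $\mathsf{CTL}^*_\delta$ state formula $\varphi$: $s\models\varphi$ in $D(K)$ iff $s\models\mathbf{E}(\varphi)$ in $K$.
   Context: A Kripke structure is $K=(S,L,\to)$ with $L:S\to\mathcal{P}(\mathbf{AP})$ and $\to\subseteq S\times S$ (not necessarily total). Paths are finite sequences $s_0,\dots,s_n$ or infinite sequences $s_0,s_1,\dots$ with $s_k\to s_{k+1}$; a path is maximal if infinite or if its last state has no successor. The deadlock extension $D(K)$ adds a fresh state $s_\delta$ labelled $\{\delta\}$, where $\delta\notin\mathbf{AP}$ is a fresh atomic proposition, a transition $s_\delta\to s_\delta$, and a transition $u\to s_\delta$ from every state $u$ of $K$ without successors. $\mathsf{CTL}^*_\infty$: state formulas $\varphi::=p\mid\neg\varphi\mid\bigwedge\Phi'\mid\exists\psi$ and path formulas $\psi::=\varphi\mid\neg\psi\mid\bigwedge\Psi'\mid\psi\,\mathsf{U}\,\psi\mid\infty$ ($p\in\mathbf{AP}$, $\Phi',\Psi'$ arbitrary sets). $\mathsf{CTL}^*_\delta$ is the same but without $\infty$ and with atomic propositions from $\mathbf{AP}\cup\{\delta\}$. Validity (state formulas at states, path formulas on maximal paths): $s\models p$ iff $p\in L(s)$; negation and conjunction as usual; $s\models\exists\psi$ iff some maximal path $\pi$ from $s$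 has $\pi\models\psi$; $\pi\models\varphi$ iff its first state satisfies $\varphi$; $\pi\models\psi\,\mathsf{U}\,\psi'$ iff some suffix $\pi'$ of $\pi$ has $\pi'\models\psi'$ and $\pi''\models\psi$ for every suffix $\pi''$ of $\pi$ of which $\pi'$ is a proper suffix; $\pi\models\infty$ iff $\pi$ is infinite. Abbreviations: $\top=\bigwedge\emptyset$, $\psi\vee\psi'=\neg(\neg\psi\wedge\neg\psi')$, $\mathsf{F}\psi=\top\,\mathsf{U}\,\psi$, $\mathsf{G}\psi=\neg\mathsf{F}\neg\psi$. The mapping $\mathbf{D}$ from $\mathsf{CTL}^*_\infty$ to $\mathsf{CTL}^*_\delta$ formulas: $\mathbf{D}(p)=p$; $\mathbf{D}(\neg\varphi)=\neg\delta\wedge\neg\mathbf{D}(\varphi)$; $\mathbf{D}(\bigwedge_{i}\varphi_i)=\bigwedge_i\mathbf{D}(\varphi_i)$; $\mathbf{D}(\exists\psi)=\exists\mathbf{D}(\psi)$; $\mathbf{D}(\neg\psi)=\neg\delta\wedge\neg\mathbf{D}(\psi)$; $\mathbf{D}(\bigwedge_i\psi_i)=\bigwedge_i\mathbf{D}(\psi_i)$; $\mathbf{D}(\psi\,\mathsf{U}\,\psi')=\mathbf{D}(\psi)\,\mathsf{U}\,\mathbf{D}(\psi')$; $\mathbf{D}(\infty)=\neg\mathsf{F}\delta$ (state formulas used as path formulas are translated by the state clauses). The mapping $\mathbf{E}$ from $\mathsf{CTL}^*_\delta$ to $\mathsf{CTL}^*_\infty$ formulas: $\mathbf{E}(p)=p$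 for $p\in\mathbf{AP}$; $\mathbf{E}(\delta)=\neg\top$; $\mathbf{E}$ commutes with $\neg$, $\bigwedge$ and $\exists$; and $\mathbf{E}(\psi\,\mathsf{U}\,\psi')=X\vee(\mathbf{E}(\psi)\,\mathsf{U}\,\mathbf{E}(\psi'))$, where $X=\neg\infty\wedge\mathsf{G}\,\mathbf{E}(\psi)$ if $s_\delta\models\exists\psi'$ (in a deadlock extension; this depends only on $\psi'$ since the only maximal path from $s_\delta$ is $s_\delta,s_\delta,\dots$), and $X=\mathbf{E}(\psi)\,\mathsf{U}\,\neg\top$ otherwise. *)

theory Defs
  imports Main
begin

text \<open>A Kripke structure over atomic propositions of type 'ap is given by a transition
relation R on the state type 's (not necessarily total) and a labelling L.\<close>

datatype 's path = FinP "'s list" | InfP "nat \<Rightarrow> 's"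

fun pfirst :: "'s path \<Rightarrow> 's" where
  "pfirst (FinP xs) = hd xs"
| "pfirst (InfP f) = f 0"

fun pvalid :: "nat \<Rightarrow> 's path \<Rightarrow> bool" where
  "pvalid k (FinP xs) = (k < length xs)"
| "pvalid k (InfP f) = True"

fun psuffix :: "nat \<Rightarrow> 's path \<Rightarrow> 's path" where
  "psuffix k (FinP xs) = FinP (drop k xs)"
| "psuffix k (InfP f) = InfP (\<lambda>i. f (i + k))"

fun pinfinite :: "'s path \<Rightarrow> bool" where
  "pinfinite (FinP xs) = False"
| "pinfinite (InfP f) = True"

fun is_path :: "('s \<Rightarrow> 's \<Rightarrow> bool) \<Rightarrow> 's path \<Rightarrow> bool" where
  "is_path R (FinP xs) = (xs \<noteq> [] \<and> (\<forall>i. Suc i < length xs \<longrightarrow> R (xs ! i) (xs ! Suc i)))"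
| "is_path R (InfP f) = (\<forall>i. R (f i) (f (Suc i)))"

fun is_maximal :: "('s \<Rightarrow> 's \<Rightarrow> bool) \<Rightarrow> 's path \<Rightarrow> bool" where
  "is_maximal R (FinP xs) = (\<not> (\<exists>t. R (last xs) t))"
| "is_maximal R (InfP f) = True"

definition maximal_path :: "('s \<Rightarrow> 's \<Rightarrow> bool) \<Rightarrow> 's path \<Rightarrow> bool" where
  "maximal_path R p \<longleftrightarrow> is_path R p \<and> is_maximal R p"

text \<open>States of D(K) are 's option, None being the fresh state s_delta.
Atomic propositions of D(K) are 'ap option, None being the fresh proposition delta.\<close>

fun DR :: "('s \<Rightarrow> 's \<Rightarrow> bool) \<Rightarrow> 's option \<Rightarrow> 's option \<Rightarrow> bool" where
  "DR R (Some u) (Some v) = R u v"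
| "DR R (Some u) None = (\<forall>v. \<not> R u v)"
| "DR R None None = True"
| "DR R None (Some v) = False"

fun DL :: "('s \<Rightarrow> 'ap set) \<Rightarrow> 's option \<Rightarrow> 'ap option set" where
  "DL L (Some u) = Some ` L u"
| "DL L None = {None}"

text \<open>Conjunctions range over arbitrary families indexed by subsets of the type 'i.\<close>

datatype ('ap, 'i) sf =
    SProp 'ap
  | SNot "('ap, 'i) sf"
  | SAnd "'i set" "'i \<Rightarrow> ('ap, 'i) sf"
  | SEx "('ap, 'i) pf"
and ('ap, 'i) pf =
    PSt "('ap, 'i) sf"
  | PNot "('ap, 'i) pf"
  | PAnd "'i set" "'i \<Rightarrow> ('ap, 'i) pf"
  | PUntil "('ap, 'i) pf" "('ap, 'i) pf"
  | PInf

primrec sat_s :: "('s \<Rightarrow> 's \<Rightarrow> bool) \<Rightarrow> ('s \<Rightarrow> 'ap set) \<Rightarrow> 's \<Rightarrow> ('ap, 'i) sf \<Rightarrow> bool"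
and sat_p :: "('s \<Rightarrow> 's \<Rightarrow> bool) \<Rightarrow> ('s \<Rightarrow> 'ap set) \<Rightarrow> 's path \<Rightarrow> ('ap, 'i) pf \<Rightarrow> bool" where
  "sat_s R L s (SProp p) = (p \<in> L s)"
| "sat_s R L s (SNot \<phi>) = (\<not> sat_s R L s \<phi>)"
| "sat_s R L s (SAnd I f) = (\<forall>i\<in>I. sat_s R L s (f i))"
| "sat_s R L s (SEx \<psi>) = (\<exists>\<pi>. maximal_path R \<pi> \<and> pfirst \<pi> = s \<and> sat_p R L \<pi> \<psi>)"
| "sat_p R L \<pi> (PSt \<phi>) = sat_s R L (pfirst \<pi>) \<phi>"
| "sat_p R L \<pi> (PNot \<psi>) = (\<not> sat_p R L \<pi> \<psi>)"
| "sat_p R L \<pi> (PAnd I f) = (\<forall>i\<in>I. sat_p R L \<pi> (f i))"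
| "sat_p R L \<pi> (PUntil \<psi> \<psi>') =
     (\<exists>k. pvalid k \<pi> \<and> sat_p R L (psuffix k \<pi>) \<psi>' \<and> (\<forall>j<k. sat_p R L (psuffix j \<pi>) \<psi>))"
| "sat_p R L \<pi> PInf = pinfinite \<pi>"

datatype ('ap, 'i) dsf =
    DSProp "'ap option"
  | DSNot "('ap, 'i) dsf"
  | DSAnd "'i set" "'i \<Rightarrow> ('ap, 'i) dsf"
  | DSEx "('ap, 'i) dpf"
and ('ap, 'i) dpf =
    DPSt "('ap, 'i) dsf"
  | DPNot "('ap, 'i) dpf"
  | DPAnd "'i set" "'i \<Rightarrow> ('ap, 'i) dpf"
  | DPUntil "('ap, 'i) dpf" "('ap, 'i) dpf"

primrec sat_ds :: "('s \<Rightarrow> 's \<Rightarrow> bool) \<Rightarrow> ('s \<Rightarrow> 'ap option set) \<Rightarrow> 's \<Rightarrow> ('ap, 'i) dsf \<Rightarrow> bool"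
and sat_dp :: "('s \<Rightarrow> 's \<Rightarrow> bool) \<Rightarrow> ('s \<Rightarrow> 'ap option set) \<Rightarrow> 's path \<Rightarrow> ('ap, 'i) dpf \<Rightarrow> bool" where
  "sat_ds R L s (DSProp p) = (p \<in> L s)"
| "sat_ds R L s (DSNot \<phi>) = (\<not> sat_ds R L s \<phi>)"
| "sat_ds R L s (DSAnd I f) = (\<forall>i\<in>I. sat_ds R L s (f i))"
| "sat_ds R L s (DSEx \<psi>) = (\<exists>\<pi>. maximal_path R \<pi> \<and> pfirst \<pi> = s \<and> sat_dp R L \<pi> \<psi>)"
| "sat_dp R L \<pi> (DPSt \<phi>) = sat_ds R L (pfirst \<pi>) \<phi>"
| "sat_dp R L \<pi> (DPNot \<psi>) = (\<not> sat_dp R L \<pi> \<psi>)"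
| "sat_dp R L \<pi> (DPAnd I f) = (\<forall>i\<in>I. sat_dp R L \<pi> (f i))"
| "sat_dp R L \<pi> (DPUntil \<psi> \<psi>') =
     (\<exists>k. pvalid k \<pi> \<and> sat_dp R L (psuffix k \<pi>) \<psi>' \<and> (\<forall>j<k. sat_dp R L (psuffix j \<pi>) \<psi>))"

text \<open>Two fixed distinct indices (exist whenever 'i has at least two elements),
used to express binary conjunction as a conjunction over a two-element set.\<close>
definition idx2 :: "'i \<times> 'i" where
  "idx2 = (SOME p. fst p \<noteq> snd p)"

definition sand2 :: "('ap, 'i) sf \<Rightarrow> ('ap, 'i) sf \<Rightarrow> ('ap, 'i) sf" where
  "sand2 a b = SAnd {fst idx2, snd idx2} (\<lambda>i. if i = fst idx2 then a else b)"
definition pand2 :: "('ap, 'i) pf \<Rightarrow> ('ap, 'i) pf \<Rightarrow> ('ap, 'i) pf" where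
  "pand2 a b = PAnd {fst idx2, snd idx2} (\<lambda>i. if i = fst idx2 then a else b)"
definition dsand2 :: "('ap, 'i) dsf \<Rightarrow> ('ap, 'i) dsf \<Rightarrow> ('ap, 'i) dsf" where
  "dsand2 a b = DSAnd {fst idx2, snd idx2} (\<lambda>i. if i = fst idx2 then a else b)"
definition dpand2 :: "('ap, 'i) dpf \<Rightarrow> ('ap, 'i) dpf \<Rightarrow> ('ap, 'i) dpf" where
  "dpand2 a b = DPAnd {fst idx2, snd idx2} (\<lambda>i. if i = fst idx2 then a else b)"

definition stop :: "('ap, 'i) sf" where "stop = SAnd {} (\<lambda>_. undefined)"
definition ptop :: "('ap, 'i) pf" where "ptop = PAnd {} (\<lambda>_. undefined)"
definition dptop :: "('ap, 'i) dpf" where "dptop = DPAnd {} (\<lambda>_. undefined)"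

definition por :: "('ap, 'i) pf \<Rightarrow> ('ap, 'i) pf \<Rightarrow> ('ap, 'i) pf" where
  "por a b = PNot (pand2 (PNot a) (PNot b))"
definition pF :: "('ap, 'i) pf \<Rightarrow> ('ap, 'i) pf" where
  "pF a = PUntil ptop a"
definition pG :: "('ap, 'i) pf \<Rightarrow> ('ap, 'i) pf" where
  "pG a = PNot (pF (PNot a))"
definition dpF :: "('ap, 'i) dpf \<Rightarrow> ('ap, 'i) dpf" where
  "dpF a = DPUntil dptop a"

definition dDelta :: "('ap, 'i) dsf" where "dDelta = DSProp None"

primrec Ds :: "('ap, 'i) sf \<Rightarrow> ('ap, 'i) dsf" and Dp :: "('ap, 'i) pf \<Rightarrow> ('ap, 'i) dpf" where
  "Ds (SProp p) = DSProp (Some p)"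
| "Ds (SNot \<phi>) = dsand2 (DSNot dDelta) (DSNot (Ds \<phi>))"
| "Ds (SAnd I f) = DSAnd I (\<lambda>i. Ds (f i))"
| "Ds (SEx \<psi>) = DSEx (Dp \<psi>)"
| "Dp (PSt \<phi>) = DPSt (Ds \<phi>)"
| "Dp (PNot \<psi>) = dpand2 (DPNot (DPSt dDelta)) (DPNot (Dp \<psi>))"
| "Dp (PAnd I f) = DPAnd I (\<lambda>i. Dp (f i))"
| "Dp (PUntil \<psi> \<psi>') = DPUntil (Dp \<psi>) (Dp \<psi>')"
| "Dp PInf = DPNot (dpF (DPSt dDelta))"

text \<open>Whether s_delta satisfies exists-psi' in a deadlock extension; evaluated in the
deadlock extension of the one-state Kripke structure without transitions (any deadlock
extension gives the same answer, as the only maximal path from s_delta is constant).\<close>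
definition delta_cond :: "('ap, 'i) dpf \<Rightarrow> bool" where
  "delta_cond \<psi>' = sat_ds (DR (\<lambda>(_::unit) _. False)) (DL (\<lambda>_. {})) None (DSEx \<psi>')"

primrec Es :: "('ap, 'i) dsf \<Rightarrow> ('ap, 'i) sf" and Ep :: "('ap, 'i) dpf \<Rightarrow> ('ap, 'i) pf" where
  "Es (DSProp p) = (case p of Some q \<Rightarrow> SProp q | None \<Rightarrow> SNot stop)"
| "Es (DSNot \<phi>) = SNot (Es \<phi>)"
| "Es (DSAnd I f) = SAnd I (\<lambda>i. Es (f i))"
| "Es (DSEx \<psi>) = SEx (Ep \<psi>)"
| "Ep (DPSt \<phi>) = PSt (Es \<phi>)"
| "Ep (DPNot \<psi>) = PNot (Ep \<psi>)"
| "Ep (DPAnd I f) = PAnd I (\<lambda>i. Ep (f i))"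
| "Ep (DPUntil \<psi> \<psi>') =
     por (if delta_cond \<psi>' then pand2 (PNot PInf) (pG (Ep \<psi>))
          else PUntil (Ep \<psi>) (PSt (SNot stop)))
         (PUntil (Ep \<psi>) (Ep \<psi>'))"

end

theory Submission
  imports Defs
begin

text \<open>Maximal paths of D(K) starting in a state of K are exactly the images of maximal paths of K,
padded by s_delta forever once they deadlock; the only maximal path from s_delta is the constant one.
Both translations are therefore proved correct by simultaneous induction on state and path formulas,
relating a path \<open>\<pi>\<close> of K to its padded image. The one genuinely new case is Until: a witness position
of the padded path may lie in the s_delta tail, which in K corresponds to a finite path all of whose
suffixes satisfy the left operand. For D this case collapses, because a D-formula true at s_delta
holds everywhere (D guards every negation by \<open>\<not>\<delta>\<close>); for E it is the disjunct X.\<close>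

lemma psuffix_0 [simp]: "psuffix 0 \<pi> = \<pi>"
  by (cases \<pi>) auto

lemma pvalid_le: "pvalid k \<pi> \<Longrightarrow> j \<le> k \<Longrightarrow> pvalid j \<pi>"
  by (cases \<pi>) auto

lemma maximal_path_pvalid_0: "maximal_path R \<pi> \<Longrightarrow> pvalid 0 \<pi>"
  by (cases \<pi>) (auto simp: maximal_path_def)

lemma maximal_path_psuffix: "maximal_path R \<pi> \<Longrightarrow> pvalid k \<pi> \<Longrightarrow> maximal_path R (psuffix k \<pi>)"
  by (cases \<pi>) (auto simp: maximal_path_def)

lemma ex_maximal_path_if_serial:
  assumes "\<And>u. \<exists>v. R u v"
  shows "\<exists>\<pi>. maximal_path R \<pi> \<and> pfirst \<pi> = s"
proof -
  define f where "f = rec_nat s (\<lambda>_ u. SOME v. R u v)"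
  have "R (f i) (f (Suc i))" for i
    unfolding f_def by (simp add: someI_ex[OF assms])
  then show ?thesis
    by (intro exI[of _ "InfP f"]) (simp add: maximal_path_def f_def)
qed

subsection \<open>Paths of the deadlock extension\<close>

lemma DR_serial: "\<exists>v. DR R u v"
proof (cases u)
  case (Some a)
  then show ?thesis
    by (cases "\<exists>v. R a v") (auto intro: exI[of _ None] exI[of _ "Some _"])
qed (auto intro: exI[of _ None])

lemma DR_None_iff: "DR R None v \<longleftrightarrow> v = None"
  by (cases v) auto

lemma DR_chain_None_absorbing:
  assumes "\<And>i. DR R (f i) (f (Suc i))" and "f n = None" and "n \<le> m"
  shows "f m = None"
  using assms(3)
proof (induction m rule: dec_induct)
  case (step m)
  then show ?case using assms(1)[of m] DR_None_iff by metis
qed (use assms(2) in simp)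

fun deadlock_path :: "'s path \<Rightarrow> 's option path" where
  "deadlock_path (FinP xs) = InfP (\<lambda>i. if i < length xs then Some (xs ! i) else None)"
| "deadlock_path (InfP f) = InfP (\<lambda>i. Some (f i))"

definition delta_path :: "'s option path" where
  "delta_path = InfP (\<lambda>_. None)"

lemma pvalid_deadlock_path [simp]: "pvalid k (deadlock_path \<pi>)"
  by (cases \<pi>) auto

lemma pvalid_delta_path [simp]: "pvalid k delta_path"
  by (simp add: delta_path_def)

lemma pfirst_delta_path [simp]: "pfirst delta_path = None"
  by (simp add: delta_path_def)

lemma psuffix_delta_path [simp]: "psuffix k delta_path = delta_path"
  by (simp add: delta_path_def)

lemma pfirst_deadlock_path: "pvalid 0 \<pi> \<Longrightarrow> pfirst (deadlock_path \<pi>) = Some (pfirst \<pi>)"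
  by (cases \<pi>) (auto simp: hd_conv_nth)

lemma psuffix_deadlock_path:
  "psuffix k (deadlock_path \<pi>) = (if pvalid k \<pi> then deadlock_path (psuffix k \<pi>) else delta_path)"
  by (cases \<pi>) (auto simp: fun_eq_iff add.commute delta_path_def)

lemma maximal_path_delta_path: "maximal_path (DR R) delta_path"
  by (simp add: maximal_path_def delta_path_def)

lemma maximal_path_deadlock_path:
  assumes "maximal_path R \<pi>"
  shows "maximal_path (DR R) (deadlock_path \<pi>)"
proof (cases \<pi>)
  case (FinP xs)
  have "DR R (if i < length xs then Some (xs ! i) else None)
          (if Suc i < length xs then Some (xs ! Suc i) else None)" for i
  proof -
    consider "Suc i < length xs" | "Suc i = length xs" | "Suc i > length xs" by linarith
    then show ?thesis
    proof cases
      case 2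
      then have "last xs = xs ! i" by (metis last_conv_nth diff_Suc_1 list.size(3) nat.distinct(1))
      then show ?thesis using assms FinP 2 by (auto simp: maximal_path_def)
    qed (use assms FinP in \<open>auto simp: maximal_path_def\<close>)
  qed
  then show ?thesis using FinP by (simp add: maximal_path_def)
qed (use assms in \<open>simp add: maximal_path_def\<close>)

lemma maximal_path_DR_from_None:
  assumes "maximal_path (DR R) \<rho>" and "pfirst \<rho> = None"
  shows "\<rho> = delta_path"
proof (cases \<rho>)
  case (FinP xs)
  then show ?thesis using assms DR_serial[of R "last xs"] by (auto simp: maximal_path_def)
next
  case (InfP f)
  have "f i = None" for i
    by (rule DR_chain_None_absorbing[of R f 0]) (use assms InfP in \<open>auto simp: maximal_path_def\<close>)+
  then show ?thesis using InfP by (simp add: delta_path_def fun_eq_iff)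
qed

lemma DR_chain_avoiding_None:
  assumes "\<And>i. DR R (f i) (f (Suc i))" and "\<And>i. f i \<noteq> None"
  shows "maximal_path R (InfP (the \<circ> f)) \<and> InfP f = deadlock_path (InfP (the \<circ> f))"
proof -
  have f: "f i = Some (the (f i))" for i using assms(2)[of i] by auto
  have "R (the (f i)) (the (f (Suc i)))" for i
    using assms(1)[of i] f[of i] f[of "Suc i"] by (metis DR.simps(1))
  then have "maximal_path R (InfP (the \<circ> f))" by (simp add: maximal_path_def)
  moreover have "InfP f = deadlock_path (InfP (the \<circ> f))"
    by (simp add: f[symmetric])
  ultimately show ?thesis ..
qed

lemma DR_chain_reaching_None:
  assumes step: "\<And>i. DR R (f i) (f (Suc i))" and "f 0 \<noteq> None" and "f m = None"
  obtains xs where "maximal_path R (FinP xs)" and "InfP f = deadlock_path (FinP xs)"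
proof -
  define n where "n = (LEAST i. f i = None)"
  have fn: "f n = None" unfolding n_def using assms(3) by (rule LeastI)
  have before: "i < n \<Longrightarrow> f i \<noteq> None" for i unfolding n_def using not_less_Least by blast
  have after: "n \<le> i \<Longrightarrow> f i = None" for i using DR_chain_None_absorbing[OF step fn] .
  have n0: "n > 0" using fn assms(2) by (cases n) auto
  define xs where "xs = map (the \<circ> f) [0..<n]"
  have len: "length xs = n" by (simp add: xs_def)
  have xs: "i < n \<Longrightarrow> f i = Some (xs ! i)" for i using before[of i] by (auto simp: xs_def)
  have "xs \<noteq> []" using len n0 by auto
  have "R (xs ! i) (xs ! Suc i)" if "Suc i < length xs" for i
    using step[of i] xs[of i] xs[of "Suc i"] that len by simp
  then have "is_path R (FinP xs)" using \<open>xs \<noteq> []\<close> by simp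
  moreover have "\<not> R (last xs) t" for t
    using step[of "n - 1"] xs[of "n - 1"] fn n0 len \<open>xs \<noteq> []\<close> by (simp add: last_conv_nth)
  ultimately have "maximal_path R (FinP xs)" by (simp add: maximal_path_def)
  moreover have "InfP f = deadlock_path (FinP xs)" using xs after len by (auto simp: fun_eq_iff)
  ultimately show ?thesis by (rule that)
qed

lemma maximal_path_DR_from_Some:
  assumes "maximal_path (DR R) \<rho>" and "pfirst \<rho> = Some s"
  obtains \<pi> where "maximal_path R \<pi>" and "pfirst \<pi> = s" and "\<rho> = deadlock_path \<pi>"
proof (cases \<rho>)
  case (FinP xs)
  then show ?thesis using assms DR_serial[of R "last xs"] by (auto simp: maximal_path_def)
next
  case (InfP f)
  have step: "DR R (f i) (f (Suc i))" for i using assms(1) InfP by (simp add: maximal_path_def)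
  have "f 0 = Some s" using assms(2) InfP by simp
  obtain \<pi> where \<pi>: "maximal_path R \<pi>" and "\<rho> = deadlock_path \<pi>"
  proof (cases "\<exists>m. f m = None")
    case True
    then show ?thesis
      using DR_chain_reaching_None[of R f] step \<open>f 0 = Some s\<close> InfP that by blast
  next
    case False
    then have "maximal_path R (InfP (the \<circ> f)) \<and> InfP f = deadlock_path (InfP (the \<circ> f))"
      by (intro DR_chain_avoiding_None step) auto
    with InfP that show ?thesis by blast
  qed
  moreover have "pfirst \<pi> = s"
    using assms(2) calculation pfirst_deadlock_path[OF maximal_path_pvalid_0[OF \<pi>]] by simp
  ultimately show ?thesis using that by blast
qed

lemma maximal_path_exists:
  obtains \<pi> where "maximal_path R \<pi>" and "pfirst \<pi> = s"
proof -
  obtain \<rho> where "maximal_path (DR R) \<rho>" and "pfirst \<rho> = Some s"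
    using ex_maximal_path_if_serial[of "DR R", OF DR_serial] by blast
  then show ?thesis using that by (rule maximal_path_DR_from_Some)
qed

lemma ex_maximal_path_DR_from_Some:
  "(\<exists>\<rho>. maximal_path (DR R) \<rho> \<and> pfirst \<rho> = Some s \<and> P \<rho>)
     \<longleftrightarrow> (\<exists>\<pi>. maximal_path R \<pi> \<and> pfirst \<pi> = s \<and> P (deadlock_path \<pi>))"
  (is "?D \<longleftrightarrow> ?K")
proof
  assume ?D
  then obtain \<rho> where \<rho>: "maximal_path (DR R) \<rho>" "pfirst \<rho> = Some s" and "P \<rho>" by blast
  from \<rho> obtain \<pi> where "maximal_path R \<pi>" "pfirst \<pi> = s" "\<rho> = deadlock_path \<pi>"
    by (rule maximal_path_DR_from_Some)
  with \<open>P \<rho>\<close> show ?K by blast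
next
  assume ?K
  then obtain \<pi> where "maximal_path R \<pi>" "pfirst \<pi> = s" "P (deadlock_path \<pi>)" by blast
  then show ?D
    using maximal_path_deadlock_path pfirst_deadlock_path[OF maximal_path_pvalid_0] by blast
qed

lemma ex_maximal_path_DR_from_None:
  "(\<exists>\<rho>. maximal_path (DR R) \<rho> \<and> pfirst \<rho> = None \<and> P \<rho>) \<longleftrightarrow> P delta_path"
  using maximal_path_DR_from_None maximal_path_delta_path by fastforce

lemma sat_dp_DPUntil_deadlock_path:
  "sat_dp R L (deadlock_path \<pi>) (DPUntil \<psi> \<psi>')
   \<longleftrightarrow> (\<exists>k. pvalid k \<pi> \<and> sat_dp R L (deadlock_path (psuffix k \<pi>)) \<psi>'
              \<and> (\<forall>j<k. sat_dp R L (deadlock_path (psuffix j \<pi>)) \<psi>))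
     \<or> (\<not> pinfinite \<pi> \<and> sat_dp R L delta_path \<psi>'
        \<and> (\<forall>k. pvalid k \<pi> \<longrightarrow> sat_dp R L (deadlock_path (psuffix k \<pi>)) \<psi>))"
  (is "?lhs \<longleftrightarrow> ?inside \<or> ?tail")
proof
  assume ?lhs
  then obtain k where \<psi>': "sat_dp R L (psuffix k (deadlock_path \<pi>)) \<psi>'"
    and \<psi>: "\<forall>j<k. sat_dp R L (psuffix j (deadlock_path \<pi>)) \<psi>" by auto
  show "?inside \<or> ?tail"
  proof (cases "pvalid k \<pi>")
    case True
    then have ?inside
      using \<psi>' \<psi> pvalid_le[OF True] by (auto simp: psuffix_deadlock_path)
    then show ?thesis ..
  next
    case False
    then have "\<not> pinfinite \<pi>" and before_k: "pvalid j \<pi> \<Longrightarrow> j < k" for j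
      by (cases \<pi>; auto)+
    moreover have "sat_dp R L delta_path \<psi>'" using \<psi>' False by (simp add: psuffix_deadlock_path)
    moreover have "\<forall>j. pvalid j \<pi> \<longrightarrow> sat_dp R L (deadlock_path (psuffix j \<pi>)) \<psi>"
      using \<psi> before_k by (metis psuffix_deadlock_path)
    ultimately show ?thesis by blast
  qed
next
  assume "?inside \<or> ?tail"
  then show ?lhs
  proof
    assume ?inside
    then obtain k where k: "pvalid k \<pi>" "sat_dp R L (deadlock_path (psuffix k \<pi>)) \<psi>'"
      and \<psi>: "\<forall>j<k. sat_dp R L (deadlock_path (psuffix j \<pi>)) \<psi>" by blast
    have "\<forall>j<k. sat_dp R L (psuffix j (deadlock_path \<pi>)) \<psi>"
      using \<psi> pvalid_le[OF k(1)] by (simp add: psuffix_deadlock_path)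
    moreover have "sat_dp R L (psuffix k (deadlock_path \<pi>)) \<psi>'"
      using k by (simp add: psuffix_deadlock_path)
    ultimately show ?lhs by auto
  next
    assume ?tail
    then obtain xs where "\<pi> = FinP xs" by (cases \<pi>) auto
    with \<open>?tail\<close> show ?lhs
      by (intro sat_dp.simps(4)[THEN iffD2] exI[of _ "length xs"])
        (auto simp: psuffix_deadlock_path simp del: deadlock_path.simps)
  qed
qed

lemma ex_until_cong:
  assumes "\<And>j. pvalid j \<pi> \<Longrightarrow> A j \<longleftrightarrow> A' j" and "\<And>j. pvalid j \<pi> \<Longrightarrow> B j \<longleftrightarrow> B' j"
  shows "(\<exists>k. pvalid k \<pi> \<and> B k \<and> (\<forall>j<k. A j)) \<longleftrightarrow> (\<exists>k. pvalid k \<pi> \<and> B' k \<and> (\<forall>j<k. A' j))"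
  using assms pvalid_le by (meson less_imp_le)

lemma idx2_distinct:
  assumes "infinite (UNIV :: 'i set)"
  shows "fst (idx2 :: 'i \<times> 'i) \<noteq> snd idx2"
proof -
  obtain a b :: 'i where "a \<noteq> b"
    using assms by (metis finite.emptyI finite_insert finite_subset subsetI insertCI UNIV_I)
  then have "\<exists>p :: 'i \<times> 'i. fst p \<noteq> snd p" by (intro exI[of _ "(a, b)"]) auto
  then show ?thesis unfolding idx2_def by (rule someI_ex)
qed

context
  assumes infinite_index: "infinite (UNIV :: 'i set)"
begin

lemma sat_ds_dsand2:
  "sat_ds R L s (dsand2 a b :: ('ap, 'i) dsf) \<longleftrightarrow> sat_ds R L s a \<and> sat_ds R L s b"
  using idx2_distinct[OF infinite_index] by (auto simp: dsand2_def)

lemma sat_dp_dpand2: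
  "sat_dp R L \<pi> (dpand2 a b :: ('ap, 'i) dpf) \<longleftrightarrow> sat_dp R L \<pi> a \<and> sat_dp R L \<pi> b"
  using idx2_distinct[OF infinite_index] by (auto simp: dpand2_def)

lemma sat_p_pand2:
  "sat_p R L \<pi> (pand2 a b :: ('ap, 'i) pf) \<longleftrightarrow> sat_p R L \<pi> a \<and> sat_p R L \<pi> b"
  using idx2_distinct[OF infinite_index] by (auto simp: pand2_def)

lemma sat_p_por:
  "sat_p R L \<pi> (por a b :: ('ap, 'i) pf) \<longleftrightarrow> sat_p R L \<pi> a \<or> sat_p R L \<pi> b"
  by (simp add: por_def sat_p_pand2)

end

lemma sat_dp_dpF:
  "sat_dp R L \<pi> (dpF a) \<longleftrightarrow> (\<exists>k. pvalid k \<pi> \<and> sat_dp R L (psuffix k \<pi>) a)"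
  by (simp add: dpF_def dptop_def)

lemma sat_p_pG:
  "sat_p R L \<pi> (pG a) \<longleftrightarrow> (\<forall>k. pvalid k \<pi> \<longrightarrow> sat_p R L (psuffix k \<pi>) a)"
  by (simp add: pG_def pF_def ptop_def)

lemma sat_s_stop [simp]: "sat_s R L s stop"
  by (simp add: stop_def)

subsection \<open>Formulas at s_delta\<close>

lemma sat_Ds_at_delta:
  fixes \<phi> :: "('ap, 'i) sf" and \<psi> :: "('ap, 'i) pf"
  shows "sat_ds (DR R) (DL L) None (Ds \<phi>) \<Longrightarrow> sat_s R L s \<phi>"
    and "sat_dp (DR R) (DL L) delta_path (Dp \<psi>) \<Longrightarrow> maximal_path R \<pi> \<Longrightarrow> sat_p R L \<pi> \<psi>"
proof (induct \<phi> and \<psi> arbitrary: s and \<pi>)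
  case (SNot \<phi>)
  then show ?case by (simp add: dsand2_def dDelta_def)
next
  case (SEx \<psi>)
  obtain \<pi> where "maximal_path R \<pi>" and "pfirst \<pi> = s"
    by (rule maximal_path_exists)
  with SEx show ?case by (auto simp: ex_maximal_path_DR_from_None)
next
  case (PNot \<psi>)
  then show ?case by (simp add: dpand2_def dDelta_def)
next
  case (PUntil \<psi> \<psi>')
  then have "sat_p R L \<pi> \<psi>'" by simp
  then show ?case using maximal_path_pvalid_0[OF PUntil.prems(2)] by (auto intro!: exI[of _ 0])
next
  case PInf
  then show ?case by (simp add: sat_dp_dpF dDelta_def)
qed simp_all

text \<open>This is what justifies evaluating \<open>delta_cond\<close> in a fixed one-state structure.\<close>

lemma sat_at_delta_indep:
  fixes \<phi> :: "('ap, 'i) dsf" and \<psi> :: "('ap, 'i) dpf"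
    and R :: "'s \<Rightarrow> 's \<Rightarrow> bool" and R' :: "'t \<Rightarrow> 't \<Rightarrow> bool"
  shows "sat_ds (DR R) (DL L) None \<phi> \<longleftrightarrow> sat_ds (DR R') (DL L') None \<phi>"
    and "sat_dp (DR R) (DL L) delta_path \<psi> \<longleftrightarrow> sat_dp (DR R') (DL L') delta_path \<psi>"
  by (induct \<phi> and \<psi>) (simp_all add: ex_maximal_path_DR_from_None)

lemma delta_cond_iff: "delta_cond \<psi> \<longleftrightarrow> sat_dp (DR R) (DL L) delta_path \<psi>"
  unfolding delta_cond_def sat_ds.simps ex_maximal_path_DR_from_None by (rule sat_at_delta_indep(2))

subsection \<open>Correctness of the translations\<close>

lemma sat_Ds_iff:
  fixes \<phi> :: "('ap, 'i) sf" and \<psi> :: "('ap, 'i) pf"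
  assumes "infinite (UNIV :: 'i set)"
  shows "sat_s R L s \<phi> \<longleftrightarrow> sat_ds (DR R) (DL L) (Some s) (Ds \<phi>)"
    and "maximal_path R \<pi> \<Longrightarrow> sat_p R L \<pi> \<psi> \<longleftrightarrow> sat_dp (DR R) (DL L) (deadlock_path \<pi>) (Dp \<psi>)"
proof (induct \<phi> and \<psi> arbitrary: s and \<pi>)
  case (SNot \<phi>)
  then show ?case by (simp add: sat_ds_dsand2[OF assms] dDelta_def)
next
  case (SEx \<psi>)
  then show ?case by (auto simp: ex_maximal_path_DR_from_Some)
next
  case (PSt \<phi>)
  then show ?case by (simp add: pfirst_deadlock_path maximal_path_pvalid_0)
next
  case (PNot \<psi>)
  then show ?case
    by (simp add: sat_dp_dpand2[OF assms] dDelta_def pfirst_deadlock_path maximal_path_pvalid_0)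
next
  case (PUntil \<psi> \<psi>')
  have inside: "(\<exists>k. pvalid k \<pi> \<and> sat_dp (DR R) (DL L) (deadlock_path (psuffix k \<pi>)) (Dp \<psi>')
      \<and> (\<forall>j<k. sat_dp (DR R) (DL L) (deadlock_path (psuffix j \<pi>)) (Dp \<psi>)))
    \<longleftrightarrow> sat_p R L \<pi> (PUntil \<psi> \<psi>')"
    unfolding sat_p.simps
    by (rule ex_until_cong) (use PUntil.hyps maximal_path_psuffix[OF PUntil.prems] in blast)+
  have "sat_dp (DR R) (DL L) delta_path (Dp \<psi>') \<Longrightarrow> sat_p R L \<pi> (PUntil \<psi> \<psi>')"
    using sat_Ds_at_delta(2)[OF _ PUntil.prems] maximal_path_pvalid_0[OF PUntil.prems]
    by (auto intro!: exI[of _ 0])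
  then show ?case
    unfolding Dp.simps sat_dp_DPUntil_deadlock_path using inside by blast
next
  case PInf
  then show ?case
    by (cases \<pi>) (auto simp: sat_dp_dpF dDelta_def psuffix_deadlock_path intro!: exI[of _ "length _"])
qed auto

lemma sat_Es_iff:
  fixes \<phi> :: "('ap, 'i) dsf" and \<psi> :: "('ap, 'i) dpf"
  assumes "infinite (UNIV :: 'i set)"
  shows "sat_ds (DR R) (DL L) (Some s) \<phi> \<longleftrightarrow> sat_s R L s (Es \<phi>)"
    and "maximal_path R \<pi> \<Longrightarrow> sat_dp (DR R) (DL L) (deadlock_path \<pi>) \<psi> \<longleftrightarrow> sat_p R L \<pi> (Ep \<psi>)"
proof (induct \<phi> and \<psi> arbitrary: s and \<pi>)
  case (DSProp p)
  then show ?case by (cases p) auto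
next
  case (DSEx \<psi>)
  then show ?case by (auto simp: ex_maximal_path_DR_from_Some)
next
  case (DPSt \<phi>)
  then show ?case by (simp add: pfirst_deadlock_path maximal_path_pvalid_0)
next
  case (DPUntil \<psi> \<psi>')
  have IH: "pvalid j \<pi> \<Longrightarrow> sat_dp (DR R) (DL L) (deadlock_path (psuffix j \<pi>)) \<psi> \<longleftrightarrow> sat_p R L (psuffix j \<pi>) (Ep \<psi>)"
    for j using DPUntil.hyps(1) maximal_path_psuffix[OF DPUntil.prems] by blast
  have inside: "(\<exists>k. pvalid k \<pi> \<and> sat_dp (DR R) (DL L) (deadlock_path (psuffix k \<pi>)) \<psi>'
      \<and> (\<forall>j<k. sat_dp (DR R) (DL L) (deadlock_path (psuffix j \<pi>)) \<psi>))
    \<longleftrightarrow> sat_p R L \<pi> (PUntil (Ep \<psi>) (Ep \<psi>'))"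
    unfolding sat_p.simps
    by (rule ex_until_cong) (use DPUntil.hyps maximal_path_psuffix[OF DPUntil.prems] in blast)+
  have tail: "sat_p R L \<pi> (if delta_cond \<psi>' then pand2 (PNot PInf) (pG (Ep \<psi>))
                            else PUntil (Ep \<psi>) (PSt (SNot stop)))
    \<longleftrightarrow> \<not> pinfinite \<pi> \<and> sat_dp (DR R) (DL L) delta_path \<psi>'
        \<and> (\<forall>k. pvalid k \<pi> \<longrightarrow> sat_dp (DR R) (DL L) (deadlock_path (psuffix k \<pi>)) \<psi>)"
    using IH delta_cond_iff[of \<psi>' R L] by (auto simp: sat_p_pand2[OF assms] sat_p_pG)
  show ?case
    unfolding Ep.simps sat_p_por[OF assms] sat_dp_DPUntil_deadlock_path inside tail by blast
qed auto

theorem theorem8p5: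
  fixes R :: "'s \<Rightarrow> 's \<Rightarrow> bool" and L :: "'s \<Rightarrow> 'ap set" and s :: 's
  assumes "infinite (UNIV :: 'i set)"
  shows "(\<forall>\<phi> :: ('ap, 'i) sf. sat_s R L s \<phi> \<longleftrightarrow> sat_ds (DR R) (DL L) (Some s) (Ds \<phi>))
       \<and> (\<forall>\<phi> :: ('ap, 'i) dsf. sat_ds (DR R) (DL L) (Some s) \<phi> \<longleftrightarrow> sat_s R L s (Es \<phi>))"
  by (intro conjI allI sat_Ds_iff(1)[OF assms] sat_Es_iff(1)[OF assms])

end
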